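(* Let $(X,d_X)$ be a proper, doubling metric space and $p\in X$, and assume $X$ is comparable $\eta$-self-quasisymmetric at $p$. Then $X$ admits an $\eta'$-quasisymmetric embedding into every proper weak tangent in $PWT_p(X)$, where $\eta'(t)=1/\eta^{-1}(1/t)$.
   Context: $\eta$ is a homeomorphism of $[0,\infty)$; a homeomorphism $f$ (onto its image) is $\eta$-quasisymmetric if $d(f(x),f(y))/d(f(x),f(z))\le\eta(d(x,y)/d(x,z))$ for $x\ne z$. $X$ is comparable $\eta$-self-quasisymmetric at $p$ if there are $r_p>0$ and $C_p>0$ such that for every $0<r<r_p$ there is a subset $U\subset B(p,r)$ with $p\in U$, $r/C_p\le\operatorname{diam}U\le C_pr$, and an $\eta$-quasisymmetric homeomorphism from $U$ onto $X$. Proper: closed balls compact; doubling: every set of diameter $d$ covered by a bounded number of sets of diameter $\le d/2$. A proper weak tangent of $X$ at $p$ is a pointed Gromov–Hausdorff limit of $(X,p,d_X/\lambda_n)$ with $\lambda_n\to0^+$ (pointed GH convergence $(X_n,p_n,d_n)\to(Z,z,d)$, $Z$ complete: for every $r,\varepsilon>0$, for large $n$ there is a map $g:B(p_n,r)\to Z$ with $g(p_n)=z$, additive distortion $<\varepsilon$, and $B(z,r-\varepsilon)$ in the $\varepsilon$-neighborhood of $g(B(p_n,r))$); $PWT_p(X)$ is the set of these. *)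

theory Defs
  imports "HOL-Analysis.Analysis"
begin

definition mdiam :: "('a \<Rightarrow> 'a \<Rightarrow> real) \<Rightarrow> 'a set \<Rightarrow> real" where
  "mdiam d A = (if A = {} then 0 else Sup {d x y |x y. x \<in> A \<and> y \<in> A})"

definition eta_homeo :: "(real \<Rightarrow> real) \<Rightarrow> bool" where
  "eta_homeo \<eta> \<longleftrightarrow> (\<exists>g. homeomorphism {0..} {0..} \<eta> g)"

definition quasisymmetric ::
  "'a set \<Rightarrow> ('a \<Rightarrow> 'a \<Rightarrow> real) \<Rightarrow> 'b set \<Rightarrow> ('b \<Rightarrow> 'b \<Rightarrow> real)
     \<Rightarrow> (real \<Rightarrow> real) \<Rightarrow> ('a \<Rightarrow> 'b) \<Rightarrow> bool" where
  "quasisymmetric M d N e \<eta> f \<longleftrightarrow>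
     f \<in> M \<rightarrow> N \<and>
     homeomorphic_map (Metric_space.mtopology M d)
        (subtopology (Metric_space.mtopology N e) (f ` M)) f \<and>
     (\<forall>x\<in>M. \<forall>y\<in>M. \<forall>z\<in>M. x \<noteq> z \<longrightarrow>
        e (f x) (f y) / e (f x) (f z) \<le> \<eta> (d x y / d x z))"

definition comparable_self_qs ::
  "'a set \<Rightarrow> ('a \<Rightarrow> 'a \<Rightarrow> real) \<Rightarrow> (real \<Rightarrow> real) \<Rightarrow> 'a \<Rightarrow> bool" where
  "comparable_self_qs M d \<eta> p \<longleftrightarrow>
     (\<exists>rp > 0. \<exists>Cp > 0. \<forall>r. 0 < r \<and> r < rp \<longrightarrow>
        (\<exists>U. U \<subseteq> Metric_space.mball M d p r \<and> p \<in> U \<and>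
             r / Cp \<le> mdiam d U \<and> mdiam d U \<le> Cp * r \<and>
             (\<exists>f. quasisymmetric U d M d \<eta> f \<and> f ` U = M)))"

definition proper_mspace :: "'a set \<Rightarrow> ('a \<Rightarrow> 'a \<Rightarrow> real) \<Rightarrow> bool" where
  "proper_mspace M d \<longleftrightarrow>
     (\<forall>x\<in>M. \<forall>r. compactin (Metric_space.mtopology M d) (Metric_space.mcball M d x r))"

definition doubling_mspace :: "'a set \<Rightarrow> ('a \<Rightarrow> 'a \<Rightarrow> real) \<Rightarrow> bool" where
  "doubling_mspace M d \<longleftrightarrow>
     (\<exists>N::nat. \<forall>A. A \<subseteq> M \<and> Metric_space.mbounded M d A \<longrightarrow>
        (\<exists>F. finite F \<and> card F \<le> N \<and> A \<subseteq> \<Union>F \<and>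
             (\<forall>B\<in>F. B \<subseteq> M \<and> Metric_space.mbounded M d B \<and> mdiam d B \<le> mdiam d A / 2)))"

definition pGH_conv ::
  "(nat \<Rightarrow> 'a set) \<Rightarrow> (nat \<Rightarrow> 'a) \<Rightarrow> (nat \<Rightarrow> 'a \<Rightarrow> 'a \<Rightarrow> real)
     \<Rightarrow> 'b set \<Rightarrow> 'b \<Rightarrow> ('b \<Rightarrow> 'b \<Rightarrow> real) \<Rightarrow> bool" where
  "pGH_conv Xs ps ds Z z dZ \<longleftrightarrow>
     (\<forall>n. Metric_space (Xs n) (ds n) \<and> ps n \<in> Xs n) \<and>
     Metric_space Z dZ \<and> Metric_space.mcomplete Z dZ \<and> z \<in> Z \<and>
     (\<forall>r>0. \<forall>\<epsilon>>0. \<forall>\<^sub>F n in sequentially.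
        (\<exists>g. g \<in> Metric_space.mball (Xs n) (ds n) (ps n) r \<rightarrow> Z \<and> g (ps n) = z \<and>
             (\<forall>x\<in>Metric_space.mball (Xs n) (ds n) (ps n) r.
                \<forall>y\<in>Metric_space.mball (Xs n) (ds n) (ps n) r.
                  \<bar>dZ (g x) (g y) - ds n x y\<bar> < \<epsilon>) \<and>
             (\<forall>w\<in>Metric_space.mball Z dZ z (r - \<epsilon>).
                \<exists>x\<in>Metric_space.mball (Xs n) (ds n) (ps n) r. dZ w (g x) < \<epsilon>)))"

definition in_PWT ::
  "'a set \<Rightarrow> ('a \<Rightarrow> 'a \<Rightarrow> real) \<Rightarrow> 'a \<Rightarrow> 'b set \<Rightarrow> 'b \<Rightarrow> ('b \<Rightarrow> 'b \<Rightarrow> real) \<Rightarrow> bool" where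
  "in_PWT M d p Z z dZ \<longleftrightarrow>
     (\<exists>lam::nat \<Rightarrow> real. (\<forall>n. 0 < lam n) \<and> lam \<longlonglongrightarrow> 0 \<and>
        pGH_conv (\<lambda>n. M) (\<lambda>n. p) (\<lambda>n x y. d x y / lam n) Z z dZ)"

end

theory Submission
  imports Defs
begin

(*
  For small r the comparable self-quasisymmetry gives a piece U of the ball B(p,r) of diameter
  comparable to r and an eta-quasisymmetric map of U onto X; its inverse h maps X into B(p,r) and
  satisfies the quasisymmetry inequality with the dual distortion eta'(t) = 1 / eta^-1(1/t).
  In particular X, a quasisymmetric image of a bounded set, is bounded, hence compact as X is
  proper. Taking r = lambda_n from the tangent sequence and composing h with a Gromov-Hausdorff
  approximation of (X, p, d/lambda_n) gives maps G_n of X into a fixed ball of the tangent Z that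
  satisfy the eta'-inequality up to an additive error tending to 0 and keep two fixed points of X
  uniformly apart. Since X is doubling, that ball of Z is compact; a pointwise cluster point F of
  the G_n (Tychonoff) satisfies the eta'-inequality exactly and is non-constant, hence injective,
  and continuous because eta'(t) tends to 0 with t. A continuous injection of a compact space into
  a Hausdorff space is an embedding.
*)

section \<open>Homeomorphisms of the half-line and the dual distortion\<close>

lemma eta_homeo_zero_strict_mono:
  assumes "eta_homeo \<eta>"
  shows "\<eta> 0 = 0" and "strict_mono_on {0..} \<eta>"
proof -
  obtain g where hm: "homeomorphism {0..} {0..} \<eta> g"
    using assms unfolding eta_homeo_def by blast
  have img: "\<eta> ` {0..} = {0..}" and cont: "continuous_on {0..} \<eta>" and inj: "inj_on \<eta> {0..}"
    using hm unfolding homeomorphism_def by (auto intro: inj_on_inverseI)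
  have nonneg: "0 \<le> \<eta> x" if "0 \<le> x" for x
    using img that by auto
  have between: "(\<eta> a < \<eta> x \<and> \<eta> x < \<eta> b) \<or> (\<eta> b < \<eta> x \<and> \<eta> x < \<eta> a)"
    if "0 \<le> a" "a < x" "x < b" for a x b
  proof -
    have "continuous_on {a..b} \<eta>" "inj_on \<eta> {a..b}"
      using continuous_on_subset[OF cont] inj_on_subset[OF inj] that(1) by auto
    then show ?thesis
      using continuous_inj_imp_mono[OF that(2,3)] by blast
  qed
  show zero: "\<eta> 0 = 0"
  proof (rule ccontr)
    assume "\<eta> 0 \<noteq> 0"
    obtain a where a: "0 \<le> a" "\<eta> a = 0"
      using img by (metis atLeast_iff imageE order_refl)
    obtain b where b: "0 \<le> b" "\<eta> b = \<eta> 0 + 1"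
      using img nonneg[of 0] by (metis add_nonneg_nonneg atLeast_iff imageE order_refl zero_le_one)
    have "0 < a" "0 < b" "a \<noteq> b"
      using a b \<open>\<eta> 0 \<noteq> 0\<close> nonneg[of 0] by (auto simp: order_le_less)
    \<comment> \<open>\<open>\<eta> 0\<close> lies strictly between \<open>\<eta> a = 0\<close> and \<open>\<eta> b = \<eta> 0 + 1\<close>, so \<open>0\<close> would lie between \<open>a\<close> and \<open>b\<close>.\<close>
    then show False
      using between[of 0 a b] between[of 0 b a] a b nonneg[of 0] by (cases "a < b") auto
  qed
  show "strict_mono_on {0..} \<eta>"
  proof (rule strict_mono_onI)
    fix x y :: real assume "x \<in> {0..}" "y \<in> {0..}" "x < y"
    then show "\<eta> x < \<eta> y"
      using between[of 0 x y] nonneg[of x] nonneg[of y] inj_on_eq_iff[OF inj, of y 0] zero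
      by (cases "x = 0") (auto simp: order_le_less)
  qed
qed

lemma eta_homeo_inv_into:
  assumes "eta_homeo \<eta>"
  shows "eta_homeo (inv_into {0..} \<eta>)"
proof -
  obtain g where hm: "homeomorphism {0..} {0..} \<eta> g"
    using assms unfolding eta_homeo_def by blast
  have "homeomorphism {0..} {0..} (inv_into {0..} \<eta>) \<eta>"
  proof (rule homeomorphism_cong[OF homeomorphism_symD[OF hm]])
    fix y :: real assume "y \<in> {0..}"
    moreover have "inj_on \<eta> {0..}"
      using hm unfolding homeomorphism_def by (auto intro: inj_on_inverseI)
    ultimately show "inv_into {0..} \<eta> y = g y"
      using hm by (intro inv_into_f_eq) (auto simp: homeomorphism_def)
  qed auto
  then show ?thesis
    unfolding eta_homeo_def by blast
qed

lemma eta_homeo_inv_into_f_f: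
  assumes "eta_homeo \<eta>" "0 \<le> t"
  shows "inv_into {0..} \<eta> (\<eta> t) = t"
  using assms strict_mono_on_imp_inj_on[OF eta_homeo_zero_strict_mono(2)]
  by (simp add: inv_into_f_f)

lemma eta_homeo_nonneg:
  assumes "eta_homeo \<eta>" "0 \<le> t"
  shows "0 \<le> \<eta> t"
  using assms eta_homeo_zero_strict_mono[OF assms(1)]
  by (metis atLeast_iff order_le_less strict_mono_onD)

lemma eta_homeo_less_iff:
  assumes "eta_homeo \<eta>" "0 \<le> s" "0 \<le> t"
  shows "\<eta> s < \<eta> t \<longleftrightarrow> s < t"
  using assms strict_mono_on_less[OF eta_homeo_zero_strict_mono(2)[OF assms(1)]] by simp

lemma eta_homeo_le_iff:
  assumes "eta_homeo \<eta>" "0 \<le> s" "0 \<le> t"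
  shows "\<eta> s \<le> \<eta> t \<longleftrightarrow> s \<le> t"
  using eta_homeo_less_iff[OF assms(1,3,2)] by linarith

lemma eta_homeo_pos:
  assumes "eta_homeo \<eta>" "0 < t"
  shows "0 < \<eta> t"
  using eta_homeo_less_iff[OF assms(1), of 0 t] eta_homeo_zero_strict_mono(1)[OF assms(1)] assms(2)
  by simp

lemma eta_homeo_inv_into_le:
  assumes "eta_homeo \<eta>" "0 \<le> s" "0 \<le> t" "s \<le> \<eta> t"
  shows "inv_into {0..} \<eta> s \<le> t"
  using eta_homeo_le_iff[OF eta_homeo_inv_into[OF assms(1)], of s "\<eta> t"] assms
    eta_homeo_nonneg[OF assms(1)] eta_homeo_inv_into_f_f[OF assms(1)] by simp

definition dual_distortion :: "(real \<Rightarrow> real) \<Rightarrow> real \<Rightarrow> real" where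
  "dual_distortion \<eta> t = 1 / inv_into {0..} \<eta> (1 / t)"

lemma dual_distortion_nonneg:
  assumes "eta_homeo \<eta>" "0 \<le> t"
  shows "0 \<le> dual_distortion \<eta> t"
  using eta_homeo_nonneg[OF eta_homeo_inv_into[OF assms(1)]] assms(2)
  unfolding dual_distortion_def by simp

lemma dual_distortion_pos:
  assumes "eta_homeo \<eta>" "0 < t"
  shows "0 < dual_distortion \<eta> t"
  using eta_homeo_pos[OF eta_homeo_inv_into[OF assms(1)]] assms(2)
  unfolding dual_distortion_def by simp

lemma dual_distortion_mono_on:
  assumes "eta_homeo \<eta>"
  shows "mono_on {0..} (dual_distortion \<eta>)"
proof (rule mono_onI)
  fix s t :: real assume "s \<in> {0..}" "t \<in> {0..}" "s \<le> t"
  show "dual_distortion \<eta> s \<le> dual_distortion \<eta> t"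
  proof (cases "s = 0")
    case True
    then show ?thesis
      using dual_distortion_nonneg[OF assms] \<open>t \<in> {0..}\<close>
        eta_homeo_zero_strict_mono(1)[OF eta_homeo_inv_into[OF assms]]
      by (simp add: dual_distortion_def)
  next
    case False
    let ?\<iota> = "inv_into {0..} \<eta>"
    have \<iota>: "eta_homeo ?\<iota>"
      by (rule eta_homeo_inv_into[OF assms])
    have "0 < 1 / t" "1 / t \<le> 1 / s" "0 \<le> 1 / s"
      using False \<open>s \<in> {0..}\<close> \<open>s \<le> t\<close> by (auto simp: frac_le)
    then have "?\<iota> (1 / t) \<le> ?\<iota> (1 / s)" "0 < ?\<iota> (1 / t)"
      using eta_homeo_le_iff[OF \<iota>] eta_homeo_pos[OF \<iota>] by auto
    then show ?thesis
      unfolding dual_distortion_def by (simp add: frac_le)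
  qed
qed

lemma dual_distortion_small:
  assumes "eta_homeo \<eta>" "0 < \<epsilon>"
  shows "\<exists>\<delta>>0. \<forall>t. 0 \<le> t \<and> t < \<delta> \<longrightarrow> dual_distortion \<eta> t < \<epsilon>"
proof (intro exI conjI allI impI)
  let ?\<iota> = "inv_into {0..} \<eta>"
  define \<delta> where "\<delta> = 1 / (\<eta> (1 / \<epsilon>) + 1)"
  have \<eta>0: "0 \<le> \<eta> (1 / \<epsilon>)"
    using eta_homeo_nonneg[OF assms(1)] assms(2) by simp
  then show "0 < \<delta>"
    unfolding \<delta>_def by simp
  fix t assume t: "0 \<le> t \<and> t < \<delta>"
  show "dual_distortion \<eta> t < \<epsilon>"
  proof (cases "t = 0")
    case True
    then show ?thesis
      using assms eta_homeo_zero_strict_mono(1)[OF eta_homeo_inv_into]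
      by (simp add: dual_distortion_def)
  next
    case False
    then have "\<eta> (1 / \<epsilon>) < 1 / t"
      using t \<eta>0 unfolding \<delta>_def by (simp add: field_simps)
    then have "1 / \<epsilon> < ?\<iota> (1 / t)"
      using eta_homeo_less_iff[OF eta_homeo_inv_into[OF assms(1)], of "\<eta> (1 / \<epsilon>)" "1 / t"]
        eta_homeo_inv_into_f_f[OF assms(1)] \<eta>0 t assms(2) by simp
    moreover have "0 < 1 / \<epsilon>"
      using assms(2) by simp
    ultimately have "0 < ?\<iota> (1 / t)" "1 < \<epsilon> * ?\<iota> (1 / t)"
      using assms(2) by (linarith, simp add: field_simps)
    then show ?thesis
      using assms(2) unfolding dual_distortion_def by (simp add: divide_less_eq mult.commute)
  qed
qed

section \<open>Quasisymmetry in multiplicative form\<close>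

text \<open>Here \<open>D\<close> is typically a pulled-back metric. Unlike the quotient form used in
  \<open>quasisymmetric\<close>, this form needs no non-degeneracy and survives pointwise limits.\<close>

definition qs_controlled :: "'a set \<Rightarrow> ('a \<Rightarrow> 'a \<Rightarrow> real) \<Rightarrow> (real \<Rightarrow> real) \<Rightarrow> ('a \<Rightarrow> 'a \<Rightarrow> real) \<Rightarrow> bool" where
  "qs_controlled M d \<theta> D \<longleftrightarrow>
     (\<forall>x\<in>M. \<forall>y\<in>M. \<forall>w\<in>M. x \<noteq> w \<longrightarrow> D x y \<le> \<theta> (d x y / d x w) * D x w)"

lemma quasisymmetric_inj_on:
  assumes "Metric_space U d" "quasisymmetric U d N e \<eta> f"
  shows "inj_on f U"
proof -
  interpret U: Metric_space U d by fact
  have "homeomorphic_map U.mtopology (subtopology (Metric_space.mtopology N e) (f ` U)) f"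
    using assms(2) unfolding quasisymmetric_def by blast
  then show ?thesis
    using homeomorphic_imp_injective_map by fastforce
qed

lemma quasisymmetric_inv_into_qs_controlled:
  assumes U: "Metric_space U d" and N: "Metric_space N e" and \<eta>: "eta_homeo \<eta>"
    and qs: "quasisymmetric U d N e \<eta> f" and onto: "f ` U = N"
  shows "qs_controlled N e (dual_distortion \<eta>) (\<lambda>a b. d (inv_into U f a) (inv_into U f b))"
  unfolding qs_controlled_def
proof (intro ballI impI)
  interpret U: Metric_space U d by fact
  interpret N: Metric_space N e by fact
  fix a b c assume abc: "a \<in> N" "b \<in> N" "c \<in> N" "a \<noteq> c"
  define x y w where "x = inv_into U f a" and "y = inv_into U f b" and "w = inv_into U f c"
  have xyw: "x \<in> U" "y \<in> U" "w \<in> U" "f x = a" "f y = b" "f w = c"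
    using abc onto unfolding x_def y_def w_def by (auto intro: inv_into_into f_inv_into_f)
  have "x \<noteq> w"
    using xyw abc by auto
  then have dxw: "0 < d x w"
    using xyw by simp
  show "d x y \<le> dual_distortion \<eta> (e a b / e a c) * d x w"
  proof (cases "b = a")
    case True
    then have "y = x"
      unfolding x_def y_def by simp
    then show ?thesis
      using dxw dual_distortion_nonneg[OF \<eta>] xyw by simp
  next
    case False
    then have "x \<noteq> y" "0 < e a b" "0 < e a c"
      using xyw abc by auto
    then have dxy: "0 < d x y"
      using xyw by simp
    \<comment> \<open>the quasisymmetry inequality of \<open>f\<close> for the triple \<open>(x, w, y)\<close>, inverted through \<open>\<eta>\<close>\<close>
    have "e a c / e a b \<le> \<eta> (d x w / d x y)"
      using qs \<open>x \<noteq> y\<close> xyw unfolding quasisymmetric_def by auto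
    then have "inv_into {0..} \<eta> (e a c / e a b) \<le> d x w / d x y"
      using dxw dxy \<open>0 < e a b\<close> \<open>0 < e a c\<close> by (intro eta_homeo_inv_into_le[OF \<eta>]) auto
    moreover have "0 < inv_into {0..} \<eta> (e a c / e a b)"
      using eta_homeo_pos[OF eta_homeo_inv_into[OF \<eta>]] \<open>0 < e a b\<close> \<open>0 < e a c\<close> by simp
    ultimately show ?thesis
      using dxy unfolding dual_distortion_def by (simp add: field_simps)
  qed
qed

lemma qs_controlled_lower_bound:
  assumes "Metric_space M d" "Metric_space N e" "h \<in> M \<rightarrow> N"
    and qs: "qs_controlled M d \<theta> (\<lambda>x y. e (h x) (h y))" and mono: "mono_on {0..} \<theta>"
    and R: "\<And>a. a \<in> M \<Longrightarrow> d x0 a \<le> R"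
    and pts: "x0 \<in> M" "y0 \<in> M" "x0 \<noteq> y0" "u \<in> M" "v \<in> M"
  shows "e (h u) (h v) \<le> 2 * \<theta> (R / d x0 y0) * e (h x0) (h y0)"
proof -
  interpret M: Metric_space M d by fact
  interpret N: Metric_space N e by fact
  have near: "e (h x0) (h a) \<le> \<theta> (R / d x0 y0) * e (h x0) (h y0)" if "a \<in> M" for a
  proof -
    have "e (h x0) (h a) \<le> \<theta> (d x0 a / d x0 y0) * e (h x0) (h y0)"
      using qs pts that unfolding qs_controlled_def by blast
    also have "\<dots> \<le> \<theta> (R / d x0 y0) * e (h x0) (h y0)"
    proof (rule mult_right_mono)
      show "\<theta> (d x0 a / d x0 y0) \<le> \<theta> (R / d x0 y0)"
      proof (rule mono_onD[OF mono])
        have "0 \<le> R"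
          using R[OF that] M.nonneg[of x0 a] by linarith
        then show "d x0 a / d x0 y0 \<in> {0..}" "R / d x0 y0 \<in> {0..}"
          by auto
        show "d x0 a / d x0 y0 \<le> R / d x0 y0"
          using R[OF that] by (simp add: divide_right_mono)
      qed
      show "0 \<le> e (h x0) (h y0)"
        using pts \<open>h \<in> M \<rightarrow> N\<close> by auto
    qed
    finally show ?thesis .
  qed
  have "e (h u) (h v) \<le> e (h x0) (h u) + e (h x0) (h v)"
    using pts \<open>h \<in> M \<rightarrow> N\<close> by (intro N.triangle'') auto
  then show ?thesis
    using near[OF pts(4)] near[OF pts(5)] by linarith
qed

lemma qs_controlled_inj_on:
  assumes "Metric_space Z e" "F \<in> M \<rightarrow> Z" and qs: "qs_controlled M d \<theta> (\<lambda>x y. e (F x) (F y))"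
    and "x0 \<in> M" "y0 \<in> M" "F x0 \<noteq> F y0"
  shows "inj_on F M"
proof (rule inj_onI, rule ccontr)
  interpret Z: Metric_space Z e by fact
  fix x w assume xw: "x \<in> M" "w \<in> M" "F x = F w" "x \<noteq> w"
  \<comment> \<open>collapsing one pair of points collapses everything\<close>
  have "F y = F x" if "y \<in> M" for y
  proof -
    have "e (F x) (F y) \<le> \<theta> (d x y / d x w) * e (F x) (F w)"
      using qs xw that unfolding qs_controlled_def by blast
    also have "\<dots> = 0"
      using xw funcset_mem[OF \<open>F \<in> M \<rightarrow> Z\<close>] by simp
    finally have "e (F x) (F y) = 0"
      using Z.nonneg[of "F x" "F y"] by linarith
    then show ?thesis
      using xw that funcset_mem[OF \<open>F \<in> M \<rightarrow> Z\<close>] by simp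
  qed
  then show False
    using assms(4-6) by metis
qed

lemma qs_controlled_le_modulus:
  assumes "Metric_space M d" and qs: "qs_controlled M d \<theta> D"
    and mono: "mono_on {0..} \<theta>" and nonneg: "\<And>t. 0 \<le> t \<Longrightarrow> 0 \<le> \<theta> t"
    and pts: "a \<in> M" "x \<in> M" "w \<in> M" and c: "0 < c" "c \<le> d a w"
    and B: "0 \<le> D a w" "D a w \<le> B"
  shows "D a x \<le> \<theta> (d a x / c) * B"
proof -
  interpret M: Metric_space M d by fact
  have "a \<noteq> w"
    using pts c by auto
  then have "D a x \<le> \<theta> (d a x / d a w) * D a w"
    using qs pts unfolding qs_controlled_def by blast
  also have "\<dots> \<le> \<theta> (d a x / c) * B"
  proof (rule mult_mono)
    have "d a x / d a w \<le> d a x / c"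
      using c by (intro divide_left_mono) auto
    then show "\<theta> (d a x / d a w) \<le> \<theta> (d a x / c)"
      using c by (intro mono_onD[OF mono]) auto
    show "0 \<le> \<theta> (d a x / c)"
      using nonneg c by simp
  qed (use B in auto)
  finally show ?thesis .
qed

lemma qs_controlled_continuous_map:
  assumes M: "Metric_space M d" and Z: "Metric_space Z e" and F: "F \<in> M \<rightarrow> Z"
    and qs: "qs_controlled M d \<theta> (\<lambda>x y. e (F x) (F y))"
    and mono: "mono_on {0..} \<theta>" and nonneg: "\<And>t. 0 \<le> t \<Longrightarrow> 0 \<le> \<theta> t"
    and small: "\<And>\<epsilon>. 0 < \<epsilon> \<Longrightarrow> \<exists>\<delta>>0. \<forall>t. 0 \<le> t \<and> t < \<delta> \<longrightarrow> \<theta> t < \<epsilon>"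
    and B: "\<And>x y. x \<in> M \<Longrightarrow> y \<in> M \<Longrightarrow> e (F x) (F y) \<le> B"
    and pts: "x0 \<in> M" "y0 \<in> M" "x0 \<noteq> y0"
  shows "continuous_map (Metric_space.mtopology M d) (Metric_space.mtopology Z e) F"
proof -
  interpret M: Metric_space M d by fact
  interpret Z: Metric_space Z e by fact
  define c where "c = d x0 y0 / 2"
  have c: "0 < c"
    using pts unfolding c_def by simp
  have B0: "0 \<le> B"
    using B[OF pts(1,1)] funcset_mem[OF F pts(1)] by simp
  \<comment> \<open>a partner at distance at least \<open>c\<close> bounds the denominator of the ratio below\<close>
  have far: "\<exists>w\<in>M. c \<le> d a w" if "a \<in> M" for a
  proof -
    have "c \<le> d a x0 \<or> c \<le> d a y0"
      using M.triangle''[OF pts(1) that pts(2)] unfolding c_def by linarith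
    then show ?thesis
      using pts by blast
  qed
  show ?thesis
    unfolding M.metric_continuous_map[OF Z]
  proof (intro conjI ballI allI impI)
    show "F ` M \<subseteq> Z"
      using F by blast
    fix a and \<epsilon> :: real assume a: "a \<in> M" and \<epsilon>: "0 < \<epsilon>"
    obtain \<delta> where \<delta>: "0 < \<delta>" "\<And>t. 0 \<le> t \<Longrightarrow> t < \<delta> \<Longrightarrow> \<theta> t < \<epsilon> / (B + 1)"
      using small[of "\<epsilon> / (B + 1)"] \<epsilon> B0 by auto
    obtain w where w: "w \<in> M" "c \<le> d a w"
      using far[OF a] by blast
    show "\<exists>r>0. \<forall>x. x \<in> M \<and> d a x < r \<longrightarrow> e (F a) (F x) < \<epsilon>"
    proof (intro exI[of _ "\<delta> * c"] conjI allI impI)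
      fix x assume x: "x \<in> M \<and> d a x < \<delta> * c"
      have "e (F a) (F x) \<le> \<theta> (d a x / c) * B"
        using qs_controlled_le_modulus[OF M qs mono nonneg a _ w(1) c w(2)] x B[OF a w(1)]
          funcset_mem[OF F] a w(1) by simp
      also have "\<dots> \<le> \<epsilon> / (B + 1) * B"
        using \<delta>(2)[of "d a x / c"] x c B0 by (intro mult_right_mono) (auto simp: field_simps)
      also have "\<dots> < \<epsilon>"
        using \<epsilon> B0 by (simp add: field_simps)
      finally show "e (F a) (F x) < \<epsilon>" .
    qed (use \<delta> c in simp)
  qed
qed

lemma quasisymmetric_if_qs_controlled:
  assumes M: "Metric_space M d" and Z: "Metric_space Z e"
    and cM: "compact_space (Metric_space.mtopology M d)" and F: "F \<in> M \<rightarrow> Z"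
    and qs: "qs_controlled M d \<theta> (\<lambda>x y. e (F x) (F y))" and inj: "inj_on F M"
    and cont: "continuous_map (Metric_space.mtopology M d) (Metric_space.mtopology Z e) F"
  shows "quasisymmetric M d Z e \<theta> F"
proof -
  interpret M: Metric_space M d by fact
  interpret Z: Metric_space Z e by fact
  have "homeomorphic_map M.mtopology (subtopology Z.mtopology (F ` M)) F"
    using cont F inj
    by (intro continuous_imp_homeomorphic_map[OF _ cM Hausdorff_space_subtopology[OF Z.Hausdorff_space_mtopology]])
      (auto simp: continuous_map_in_subtopology)
  moreover have "e (F x) (F y) / e (F x) (F w) \<le> \<theta> (d x y / d x w)"
    if "x \<in> M" "y \<in> M" "w \<in> M" "x \<noteq> w" for x y w
  proof -
    have "F x \<noteq> F w"
      using inj that by (auto simp: inj_on_eq_iff)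
    then have "0 < e (F x) (F w)"
      using funcset_mem[OF F] that by simp
    then show ?thesis
      using qs that unfolding qs_controlled_def by (simp add: divide_le_eq)
  qed
  ultimately show ?thesis
    unfolding quasisymmetric_def using F by blast
qed

section \<open>Bounded, doubling and self-quasisymmetric spaces\<close>

lemma mdiam_le:
  assumes "A \<noteq> {}" "\<And>x y. x \<in> A \<Longrightarrow> y \<in> A \<Longrightarrow> d x y \<le> B"
  shows "mdiam d A \<le> B"
proof -
  have "{d x y |x y. x \<in> A \<and> y \<in> A} \<noteq> {}"
    using assms(1) by blast
  then have "Sup {d x y |x y. x \<in> A \<and> y \<in> A} \<le> B"
    by (rule cSup_least) (use assms(2) in blast)
  then show ?thesis
    unfolding mdiam_def using assms(1) by simp
qed

lemma (in Metric_space) mdiam_ge: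
  assumes "mbounded A" "x \<in> A" "y \<in> A"
  shows "d x y \<le> mdiam d A"
proof -
  obtain B where "\<forall>x\<in>A. \<forall>y\<in>A. d x y \<le> B"
    using assms(1) unfolding mbounded_alt by blast
  then have "bdd_above {d x y |x y. x \<in> A \<and> y \<in> A}"
    by (auto simp: bdd_above_def)
  then show ?thesis
    unfolding mdiam_def using assms(2,3) by (auto intro!: cSup_upper)
qed

lemma mdiam_gt_obtains:
  assumes "A \<noteq> {}" "c < mdiam d A"
  obtains x y where "x \<in> A" "y \<in> A" "c < d x y"
  using mdiam_le[OF assms(1), of d c] assms(2) by (meson not_le)

lemma (in Metric_space) Metric_space_rescaled:
  assumes "0 < l"
  shows "Metric_space M (\<lambda>x y. d x y / l)"
  using assms by unfold_locales (auto simp: commute divide_right_mono add_divide_distrib[symmetric] triangle)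

lemma (in Metric_space) mball_rescaled:
  assumes "0 < l"
  shows "Metric_space.mball M (\<lambda>x y. d x y / l) p r = mball p (r * l)"
  using assms by (auto simp: Metric_space.mball_def[OF Metric_space_rescaled[OF assms]] field_simps)

lemma (in Metric_space) doubling_mspace_halving_cover:
  assumes "doubling_mspace M d" "mbounded B"
  shows "\<exists>G. finite G \<and> B \<subseteq> \<Union>G \<and> (\<forall>C\<in>G. mbounded C \<and> mdiam d C \<le> mdiam d B / 2)"
proof -
  obtain N where N: "\<forall>A. A \<subseteq> M \<and> mbounded A \<longrightarrow> (\<exists>F. finite F \<and> card F \<le> N \<and> A \<subseteq> \<Union>F \<and>
      (\<forall>B\<in>F. B \<subseteq> M \<and> mbounded B \<and> mdiam d B \<le> mdiam d A / 2))"
    using assms(1) unfolding doubling_mspace_def by (rule exE)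
  obtain F where F: "finite F" "B \<subseteq> \<Union>F" "\<forall>C\<in>F. C \<subseteq> M \<and> mbounded C \<and> mdiam d C \<le> mdiam d B / 2"
    using mp[OF spec[OF N] conjI[OF mbounded_subset_mspace[OF assms(2)] assms(2)]] by (elim exE conjE)
  then show ?thesis
    by (intro exI[of _ F] conjI ballI) auto
qed

lemma (in Metric_space) doubling_mspace_iterated_cover:
  assumes "doubling_mspace M d" "mbounded A"
  shows "\<exists>F. finite F \<and> A \<subseteq> \<Union>F \<and> (\<forall>B\<in>F. mbounded B \<and> mdiam d B \<le> mdiam d A / 2 ^ j)"
proof (induction j)
  case 0
  show ?case
    using assms(2) by (intro exI[of _ "{A}"]) simp
next
  case (Suc j)
  then obtain F where F: "finite F" "A \<subseteq> \<Union>F"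
    "\<And>B. B \<in> F \<Longrightarrow> mbounded B \<and> mdiam d B \<le> mdiam d A / 2 ^ j"
    by blast
  have "\<forall>B\<in>F. \<exists>G. finite G \<and> B \<subseteq> \<Union>G \<and> (\<forall>C\<in>G. mbounded C \<and> mdiam d C \<le> mdiam d B / 2)"
    using doubling_mspace_halving_cover[OF assms(1)] F(3) by blast
  then obtain G where G: "\<forall>B\<in>F. finite (G B) \<and> B \<subseteq> \<Union>(G B) \<and>
      (\<forall>C\<in>G B. mbounded C \<and> mdiam d C \<le> mdiam d B / 2)"
    by (rule bchoice[THEN exE])
  then have Gfin: "\<And>B. B \<in> F \<Longrightarrow> finite (G B)"
    and Gcov: "\<And>B. B \<in> F \<Longrightarrow> B \<subseteq> \<Union>(G B)"
    and Gsmall: "\<And>B C. B \<in> F \<Longrightarrow> C \<in> G B \<Longrightarrow> mbounded C \<and> mdiam d C \<le> mdiam d B / 2"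
    by auto
  show ?case
  proof (intro exI[of _ "\<Union>B\<in>F. G B"] conjI)
    show "finite (\<Union>B\<in>F. G B)"
      using F(1) Gfin by (rule finite_UN_I)
    show "A \<subseteq> \<Union>(\<Union>B\<in>F. G B)"
      using F(2) Gcov by blast
    show "\<forall>C\<in>(\<Union>B\<in>F. G B). mbounded C \<and> mdiam d C \<le> mdiam d A / 2 ^ Suc j"
    proof
      fix C assume "C \<in> (\<Union>B\<in>F. G B)"
      then obtain B where B: "B \<in> F" "C \<in> G B"
        by blast
      have "mdiam d B / 2 \<le> mdiam d A / 2 ^ j / 2"
        using F(3)[OF B(1)] by (simp add: divide_right_mono)
      then show "mbounded C \<and> mdiam d C \<le> mdiam d A / 2 ^ Suc j"
        using Gsmall[OF B] by simp
    qed
  qed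
qed

lemma (in Metric_space) mtotally_bounded_if_finite_nets:
  assumes "S \<subseteq> M" and nets: "\<And>\<epsilon>. 0 < \<epsilon> \<Longrightarrow> \<exists>C. finite C \<and> S \<subseteq> (\<Union>c\<in>C. mball c \<epsilon>)"
  shows "mtotally_bounded S"
  unfolding mtotally_bounded_def
proof (intro allI impI)
  fix \<epsilon> :: real assume "0 < \<epsilon>"
  then have "0 < \<epsilon> / 2"
    by simp
  then obtain C where C: "finite C" "S \<subseteq> (\<Union>c\<in>C. mball c (\<epsilon> / 2))"
    using nets by blast
  define C' where "C' = {c \<in> C. mball c (\<epsilon> / 2) \<inter> S \<noteq> {}}"
  have "\<forall>c\<in>C'. \<exists>x. x \<in> mball c (\<epsilon> / 2) \<inter> S"
    unfolding C'_def by blast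
  then obtain s where s: "\<forall>c\<in>C'. s c \<in> mball c (\<epsilon> / 2) \<inter> S"
    by (rule bchoice[THEN exE])
  have "S \<subseteq> (\<Union>x\<in>s ` C'. mball x \<epsilon>)"
  proof
    fix x assume "x \<in> S"
    then obtain c where c: "c \<in> C" "x \<in> mball c (\<epsilon> / 2)"
      using C(2) by blast
    then have "c \<in> C'"
      unfolding C'_def using \<open>x \<in> S\<close> by blast
    then have sc: "s c \<in> mball c (\<epsilon> / 2)" "s c \<in> S"
      using s by blast+
    then have "d (s c) x < \<epsilon>"
      using c triangle''[of "s c" c x] by simp
    then show "x \<in> (\<Union>x\<in>s ` C'. mball x \<epsilon>)"
      using \<open>c \<in> C'\<close> sc c by auto
  qed
  moreover have "finite (s ` C')"
    using C(1) unfolding C'_def by simp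
  moreover have "s ` C' \<subseteq> S"
    using s by blast
  ultimately show "\<exists>K. finite K \<and> K \<subseteq> S \<and> S \<subseteq> (\<Union>x\<in>K. mball x \<epsilon>)"
    by blast
qed

lemma ex_divide_power2_less:
  fixes D :: real
  assumes "0 < \<epsilon>"
  shows "\<exists>j. D / 2 ^ j < \<epsilon>"
proof -
  have "0 < \<epsilon> / (\<bar>D\<bar> + 1)"
    using assms by (simp add: add_nonneg_pos)
  then obtain j where j: "(1 / 2) ^ j < \<epsilon> / (\<bar>D\<bar> + 1)"
    using real_arch_pow_inv[of _ "1 / 2 :: real"] by force
  have "D / 2 ^ j = D * (1 / 2) ^ j"
    by (simp add: power_one_over)
  also have "\<dots> \<le> \<bar>D\<bar> * (1 / 2) ^ j"
    by (rule mult_right_mono) simp_all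
  also have "\<dots> \<le> \<bar>D\<bar> * (\<epsilon> / (\<bar>D\<bar> + 1))"
    using j by (intro mult_left_mono) auto
  also have "\<dots> < \<epsilon>"
    using assms by (simp add: field_simps)
  finally show ?thesis
    by blast
qed

lemma (in Metric_space) doubling_mspace_mbounded_imp_mtotally_bounded:
  assumes "doubling_mspace M d" "mbounded B"
  shows "mtotally_bounded B"
  unfolding mtotally_bounded_def
proof (intro allI impI)
  fix \<epsilon> :: real assume "0 < \<epsilon>"
  define D where "D = mdiam d B"
  obtain j where small: "D / 2 ^ j < \<epsilon>"
    using ex_divide_power2_less[OF \<open>0 < \<epsilon>\<close>] by blast
  obtain F where F: "finite F" "B \<subseteq> \<Union>F" "\<forall>P\<in>F. mbounded P \<and> mdiam d P \<le> D / 2 ^ j"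
    using doubling_mspace_iterated_cover[OF assms, of j] unfolding D_def by (elim exE conjE)
  define F' where "F' = {P \<in> F. P \<inter> B \<noteq> {}}"
  have "\<forall>P\<in>F'. \<exists>x. x \<in> P \<inter> B"
    unfolding F'_def by blast
  then obtain rep where rep: "\<forall>P\<in>F'. rep P \<in> P \<inter> B"
    by (rule bchoice[THEN exE])
  have "B \<subseteq> (\<Union>x\<in>rep ` F'. mball x \<epsilon>)"
  proof
    fix x assume "x \<in> B"
    then obtain P where P: "P \<in> F" "x \<in> P"
      using F(2) by blast
    then have "P \<in> F'"
      unfolding F'_def using \<open>x \<in> B\<close> by blast
    then have "rep P \<in> P" "rep P \<in> B"
      using rep by blast+
    moreover have "mbounded P" "mdiam d P \<le> D / 2 ^ j"
      using F(3) P(1) by blast+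
    ultimately have "d (rep P) x < \<epsilon>"
      using mdiam_ge[of P "rep P" x] P(2) small by linarith
    moreover have "x \<in> M" "rep P \<in> M"
      using \<open>mbounded P\<close> \<open>rep P \<in> P\<close> P(2) mbounded_subset_mspace by blast+
    ultimately show "x \<in> (\<Union>x\<in>rep ` F'. mball x \<epsilon>)"
      using \<open>P \<in> F'\<close> by auto
  qed
  moreover have "finite (rep ` F')" "rep ` F' \<subseteq> B"
    using F(1) rep unfolding F'_def by auto
  ultimately show "\<exists>K. finite K \<and> K \<subseteq> B \<and> B \<subseteq> (\<Union>x\<in>K. mball x \<epsilon>)"
    by blast
qed

lemma (in Metric_space) proper_mspace_compact_space:
  assumes "proper_mspace M d" "mbounded M"
  shows "compact_space mtopology"
proof (cases "M = {}")
  case False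
  obtain x r where "M \<subseteq> mcball x r"
    using assms(2) unfolding mbounded_def by blast
  then have "mcball x r = M" "x \<in> M"
    using False mcball_subset_mspace by auto
  moreover have "compactin mtopology (mcball x r)"
    using assms(1) \<open>x \<in> M\<close> unfolding proper_mspace_def by blast
  ultimately show ?thesis
    unfolding compact_space_def by simp
next
  case True
  then show ?thesis
    unfolding compact_space_def topspace_mtopology by (simp only: compactin_empty)
qed

lemma quasisymmetric_image_mbounded:
  assumes U: "Metric_space U d" and N: "Metric_space N e" and \<eta>: "eta_homeo \<eta>"
    and qs: "quasisymmetric U d N e \<eta> f" and bdd: "Metric_space.mbounded U d U"
    and pts: "u0 \<in> U" "v0 \<in> U" "u0 \<noteq> v0"
  shows "Metric_space.mbounded N e (f ` U)"
proof -
  interpret U: Metric_space U d by fact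
  interpret N: Metric_space N e by fact
  obtain B where B: "\<And>x y. x \<in> U \<Longrightarrow> y \<in> U \<Longrightarrow> d x y \<le> B"
    using bdd unfolding U.mbounded_alt by blast
  have f: "f \<in> U \<rightarrow> N"
    using qs unfolding quasisymmetric_def by auto
  have "f u0 \<noteq> f v0" "f u0 \<in> N" "f v0 \<in> N"
    using pts f quasisymmetric_inj_on[OF U qs] by (auto simp: inj_on_eq_iff)
  then have e0: "0 < e (f u0) (f v0)"
    by simp
  have "e (f u0) (f y) \<le> e (f u0) (f v0) * \<eta> (B / d u0 v0)" if "y \<in> U" for y
  proof -
    have "e (f u0) (f y) / e (f u0) (f v0) \<le> \<eta> (d u0 y / d u0 v0)"
      using qs pts that unfolding quasisymmetric_def by blast
    also have "\<dots> \<le> \<eta> (B / d u0 v0)"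
    proof -
      have "d u0 y / d u0 v0 \<le> B / d u0 v0" "0 \<le> d u0 y / d u0 v0"
        using B[OF pts(1) that] by (simp_all add: divide_right_mono)
      then show ?thesis
        using eta_homeo_le_iff[OF \<eta>, of "d u0 y / d u0 v0" "B / d u0 v0"] by linarith
    qed
    finally show ?thesis
      using e0 by (simp add: divide_le_eq mult.commute)
  qed
  then have "f ` U \<subseteq> N.mcball (f u0) (e (f u0) (f v0) * \<eta> (B / d u0 v0))"
    using f \<open>f u0 \<in> N\<close> by auto
  then show ?thesis
    unfolding N.mbounded_def by blast
qed

lemma (in Metric_space) comparable_self_qs_mbounded:
  assumes \<eta>: "eta_homeo \<eta>" and self: "comparable_self_qs M d \<eta> p"
  shows "mbounded M" and "\<exists>x\<in>M. \<exists>y\<in>M. x \<noteq> y"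
proof -
  obtain rp Cp where rp: "0 < rp" "0 < Cp" and copies: "\<And>r. 0 < r \<Longrightarrow> r < rp \<Longrightarrow>
      \<exists>U. U \<subseteq> mball p r \<and> p \<in> U \<and> r / Cp \<le> mdiam d U \<and> mdiam d U \<le> Cp * r \<and>
        (\<exists>f. quasisymmetric U d M d \<eta> f \<and> f ` U = M)"
    using self unfolding comparable_self_qs_def by metis
  obtain U f where U: "U \<subseteq> mball p (rp / 2)" "p \<in> U" "rp / 2 / Cp \<le> mdiam d U"
    and f: "quasisymmetric U d M d \<eta> f" "f ` U = M"
    using copies[of "rp / 2"] rp(1) by auto
  have "0 < rp / 2 / Cp"
    using rp by simp
  then have "0 < mdiam d U"
    using U(3) by linarith
  then obtain u0 v0 where uv: "u0 \<in> U" "v0 \<in> U" "0 < d u0 v0"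
    using mdiam_gt_obtains[of U 0 d] U(2) by blast
  have UM: "U \<subseteq> M"
    using U(1) mball_subset_mspace by blast
  then have uv_M: "u0 \<in> M" "v0 \<in> M" "u0 \<noteq> v0"
    using uv by auto
  then show "\<exists>x\<in>M. \<exists>y\<in>M. x \<noteq> y"
    by blast
  obtain B where "\<forall>x\<in>U. \<forall>y\<in>U. d x y \<le> B"
    using U(1) mbounded_mball mbounded_subset unfolding mbounded_alt by meson
  then have "Metric_space.mbounded U d U"
    unfolding Metric_space.mbounded_alt[OF subspace[OF UM]] by blast
  then have "mbounded (f ` U)"
    using quasisymmetric_image_mbounded[OF subspace[OF UM] Metric_space_axioms \<eta> f(1)] uv(1,2) uv_M(3)
    by blast
  then show "mbounded M"
    using f(2) by simp
qed

lemma (in Metric_space) comparable_self_qs_small_copies: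
  assumes \<eta>: "eta_homeo \<eta>" and self: "comparable_self_qs M d \<eta> p"
  obtains C r0 where "0 < C" "0 < r0"
    "\<And>l. 0 < l \<Longrightarrow> l < r0 \<Longrightarrow> \<exists>h. h \<in> M \<rightarrow> mball p l \<and>
       qs_controlled M d (dual_distortion \<eta>) (\<lambda>x y. d (h x) (h y)) \<and>
       (\<exists>u\<in>M. \<exists>v\<in>M. l < C * d (h u) (h v))"
proof -
  obtain rp Cp where rp: "0 < rp" "0 < Cp" and copies: "\<And>r. 0 < r \<Longrightarrow> r < rp \<Longrightarrow>
      \<exists>U. U \<subseteq> mball p r \<and> p \<in> U \<and> r / Cp \<le> mdiam d U \<and> mdiam d U \<le> Cp * r \<and>
        (\<exists>f. quasisymmetric U d M d \<eta> f \<and> f ` U = M)"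
    using self unfolding comparable_self_qs_def by metis
  show ?thesis
  proof (rule that[of "2 * Cp" rp])
    show "0 < 2 * Cp" "0 < rp"
      using rp by simp_all
    fix l assume l: "0 < l" "l < rp"
    obtain U f where U: "U \<subseteq> mball p l" "p \<in> U" "l / Cp \<le> mdiam d U"
      and f: "quasisymmetric U d M d \<eta> f" "f ` U = M"
      using copies[OF l] by blast
    have UM: "U \<subseteq> M"
      using U(1) mball_subset_mspace by blast
    interpret U: Metric_space U d
      by (rule subspace[OF UM])
    have inj: "inj_on f U"
      by (rule quasisymmetric_inj_on[OF U.Metric_space_axioms f(1)])
    define h where "h = inv_into U f"
    have "h x \<in> U" if "x \<in> M" for x
      unfolding h_def using that f(2) by (simp add: inv_into_into)
    then have hU: "h \<in> M \<rightarrow> mball p l"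
      using U(1) by blast
    have "l / (2 * Cp) < l / Cp"
      using l(1) rp(2) by (simp add: field_simps)
    then have "l / (2 * Cp) < mdiam d U"
      using U(3) by linarith
    then obtain u' v' where uv': "u' \<in> U" "v' \<in> U" "l / (2 * Cp) < d u' v'"
      using mdiam_gt_obtains[of U _ d] U(2) by blast
    have "f ` U \<subseteq> M"
      using f(2) by simp
    then have "f u' \<in> M" "f v' \<in> M" "h (f u') = u'" "h (f v') = v'"
      unfolding h_def using uv'(1,2) inv_into_f_f[OF inj] by auto
    moreover have "l < 2 * Cp * d u' v'"
      using uv'(3) rp(2) by (simp add: field_simps)
    moreover have "qs_controlled M d (dual_distortion \<eta>) (\<lambda>x y. d (h x) (h y))"
      unfolding h_def by (rule quasisymmetric_inv_into_qs_controlled[OF U.Metric_space_axioms Metric_space_axioms \<eta> f])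
    ultimately show "\<exists>h. h \<in> M \<rightarrow> mball p l \<and> qs_controlled M d (dual_distortion \<eta>) (\<lambda>x y. d (h x) (h y)) \<and>
        (\<exists>u\<in>M. \<exists>v\<in>M. l < 2 * Cp * d (h u) (h v))"
      using hU by metis
  qed
qed

section \<open>Proper weak tangents\<close>

lemma in_PWT_limit_space:
  assumes "in_PWT M d p Z z dZ"
  shows "Metric_space Z dZ" "Metric_space.mcomplete Z dZ" "z \<in> Z" "p \<in> M"
proof -
  obtain lam where "pGH_conv (\<lambda>n. M) (\<lambda>n. p) (\<lambda>n x y. d x y / lam n) Z z dZ"
    using assms unfolding in_PWT_def by blast
  then show "Metric_space Z dZ" "Metric_space.mcomplete Z dZ" "z \<in> Z" "p \<in> M"
    unfolding pGH_conv_def by blast+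
qed

lemma (in Metric_space) in_PWT_approximation:
  assumes "in_PWT M d p Z z dZ" "0 < r" "0 < \<epsilon>" "0 < r0"
  obtains l g where "0 < l" "l < r0" "g \<in> mball p (r * l) \<rightarrow> Z" "g p = z"
    "\<And>x y. x \<in> mball p (r * l) \<Longrightarrow> y \<in> mball p (r * l) \<Longrightarrow> \<bar>dZ (g x) (g y) - d x y / l\<bar> < \<epsilon>"
    "\<And>w. w \<in> Metric_space.mball Z dZ z (r - \<epsilon>) \<Longrightarrow> \<exists>x\<in>mball p (r * l). dZ w (g x) < \<epsilon>"
proof -
  obtain lam where lam: "\<And>n. 0 < lam n" "lam \<longlonglongrightarrow> 0"
    and gh: "pGH_conv (\<lambda>n. M) (\<lambda>n. p) (\<lambda>n x y. d x y / lam n) Z z dZ"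
    using assms(1) unfolding in_PWT_def by blast
  define P where "P n \<longleftrightarrow> lam n < r0 \<and> (\<exists>g. g \<in> mball p (r * lam n) \<rightarrow> Z \<and> g p = z \<and>
      (\<forall>x\<in>mball p (r * lam n). \<forall>y\<in>mball p (r * lam n). \<bar>dZ (g x) (g y) - d x y / lam n\<bar> < \<epsilon>) \<and>
      (\<forall>w\<in>Metric_space.mball Z dZ z (r - \<epsilon>). \<exists>x\<in>mball p (r * lam n). dZ w (g x) < \<epsilon>))" for n
  have "\<forall>r>0. \<forall>\<epsilon>>0. \<forall>\<^sub>F n in sequentially.
      \<exists>g. g \<in> Metric_space.mball M (\<lambda>x y. d x y / lam n) p r \<rightarrow> Z \<and> g p = z \<and>
        (\<forall>x\<in>Metric_space.mball M (\<lambda>x y. d x y / lam n) p r.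
          \<forall>y\<in>Metric_space.mball M (\<lambda>x y. d x y / lam n) p r. \<bar>dZ (g x) (g y) - d x y / lam n\<bar> < \<epsilon>) \<and>
        (\<forall>w\<in>Metric_space.mball Z dZ z (r - \<epsilon>).
          \<exists>x\<in>Metric_space.mball M (\<lambda>x y. d x y / lam n) p r. dZ w (g x) < \<epsilon>)"
    using gh unfolding pGH_conv_def by (elim conjE)
  then have "\<forall>\<^sub>F n in sequentially. P n"
    unfolding P_def mball_rescaled[OF lam(1)] using assms(2,3)
    by (intro eventually_conj order_tendstoD(2)[OF lam(2) assms(4)]) blast+
  then obtain n where "P n"
    unfolding eventually_sequentially by blast
  then show ?thesis
    unfolding P_def using that lam(1) by blast
qed

lemma (in Metric_space) rescaled_approximation_net:
  assumes Z: "Metric_space Z e" and l: "0 < l" and g: "g \<in> B \<rightarrow> Z"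
    and g_dist: "\<And>x y. x \<in> B \<Longrightarrow> y \<in> B \<Longrightarrow> \<bar>e (g x) (g y) - d x y / l\<bar> < \<epsilon>"
    and K: "K \<subseteq> B" "B \<subseteq> (\<Union>x\<in>K. mball x (\<epsilon> * l))"
    and w: "w \<in> Z" "x \<in> B" "e w (g x) < \<epsilon>"
  shows "\<exists>c\<in>g ` K. e c w < 3 * \<epsilon>"
proof -
  interpret Z: Metric_space Z e by fact
  obtain x' where x': "x' \<in> K" "x \<in> mball x' (\<epsilon> * l)"
    using K(2) w(2) by blast
  then have "x' \<in> B"
    using K(1) by blast
  then have "e (g x') (g x) < d x' x / l + \<epsilon>"
    using g_dist[of x' x] w(2) by linarith
  moreover have "d x' x / l < \<epsilon>"
    using x'(2) l by (simp add: field_simps)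
  moreover have "g x \<in> Z" "g x' \<in> Z"
    using g w(2) \<open>x' \<in> B\<close> by auto
  then have "e (g x') w \<le> e (g x') (g x) + e w (g x)"
    using Z.triangle[of "g x'" "g x" w] Z.commute[of w "g x"] w(1) by simp
  ultimately have "e (g x') w < 3 * \<epsilon>"
    using w(3) by linarith
  then show ?thesis
    using x'(1) by blast
qed

lemma (in Metric_space) in_PWT_mcball_mtotally_bounded:
  assumes doubling: "doubling_mspace M d" and pwt: "in_PWT M d p Z z dZ"
  shows "Metric_space.mtotally_bounded Z dZ (Metric_space.mcball Z dZ z r)"
proof -
  interpret Z: Metric_space Z dZ
    by (rule in_PWT_limit_space(1)[OF pwt])
  define \<rho> where "\<rho> = \<bar>r\<bar> + 1"
  show ?thesis
  proof (rule Z.mtotally_bounded_if_finite_nets[OF Z.mcball_subset_mspace])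
    fix \<epsilon> :: real assume "0 < \<epsilon>"
    define e where "e = min (\<epsilon> / 3) (1 / 2)"
    have e: "0 < e" "e \<le> 1 / 2" "3 * e \<le> \<epsilon>"
      using \<open>0 < \<epsilon>\<close> unfolding e_def by auto
    have "0 < \<rho>"
      unfolding \<rho>_def by simp
    then obtain l g where l: "0 < l" "l < 1" and g: "g \<in> mball p (\<rho> * l) \<rightarrow> Z" "g p = z"
      and g_dist: "\<And>x y. x \<in> mball p (\<rho> * l) \<Longrightarrow> y \<in> mball p (\<rho> * l) \<Longrightarrow>
        \<bar>dZ (g x) (g y) - d x y / l\<bar> < e"
      and g_dense: "\<And>w. w \<in> Z.mball z (\<rho> - e) \<Longrightarrow> \<exists>x\<in>mball p (\<rho> * l). dZ w (g x) < e"
      using in_PWT_approximation[OF pwt _ e(1) zero_less_one] by blast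
    have "0 < e * l"
      using e(1) l(1) by simp
    moreover have "mtotally_bounded (mball p (\<rho> * l))"
      by (rule doubling_mspace_mbounded_imp_mtotally_bounded[OF doubling mbounded_mball])
    ultimately have "\<exists>K. finite K \<and> K \<subseteq> mball p (\<rho> * l) \<and> mball p (\<rho> * l) \<subseteq> (\<Union>x\<in>K. mball x (e * l))"
      unfolding mtotally_bounded_def by simp
    then obtain K where K: "finite K" "K \<subseteq> mball p (\<rho> * l)"
      "mball p (\<rho> * l) \<subseteq> (\<Union>x\<in>K. mball x (e * l))"
      by (elim exE conjE)
    have "Z.mcball z r \<subseteq> (\<Union>c\<in>g ` K. Z.mball c \<epsilon>)"
    proof
      fix w assume w: "w \<in> Z.mcball z r"
      then have "w \<in> Z.mball z (\<rho> - e)"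
        using e(2) unfolding \<rho>_def by auto
      then obtain x where x: "x \<in> mball p (\<rho> * l)" "dZ w (g x) < e"
        using g_dense by blast
      have "w \<in> Z"
        using w by auto
      then have "\<exists>c\<in>g ` K. dZ c w < 3 * e"
        using x g_dist K(2,3) by (intro rescaled_approximation_net[OF Z.Metric_space_axioms l(1) g(1)])
      then obtain c where c: "c \<in> g ` K" "dZ c w < 3 * e"
        by blast
      then have "c \<in> Z"
        using g(1) K(2) by blast
      then have "w \<in> Z.mball c \<epsilon>"
        using c(2) e(3) \<open>w \<in> Z\<close> by simp
      then show "w \<in> (\<Union>c\<in>g ` K. Z.mball c \<epsilon>)"
        using c(1) by blast
    qed
    then show "\<exists>C. finite C \<and> Z.mcball z r \<subseteq> (\<Union>c\<in>C. Z.mball c \<epsilon>)"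
      using K(1) by blast
  qed
qed

section \<open>Pointwise limits of approximate embeddings\<close>

lemma (in Metric_space) mdist_diff_le:
  assumes "a \<in> M" "b \<in> M" "a' \<in> M" "b' \<in> M"
  shows "\<bar>d a b - d a' b'\<bar> \<le> d a a' + d b b'"
proof -
  have "d a b \<le> d a a' + d a' b' + d b b'"
    using triangle[of a a' b] triangle[of a' b' b] commute[of b' b] assms by linarith
  moreover have "d a' b' \<le> d a a' + d a b + d b b'"
    using triangle[of a' a b'] triangle[of a b b'] commute[of a' a] assms by linarith
  ultimately show ?thesis
    by linarith
qed

definition pointwise_cluster_point :: "('b \<Rightarrow> 'b \<Rightarrow> real) \<Rightarrow> 'a set \<Rightarrow> (nat \<Rightarrow> 'a \<Rightarrow> 'b) \<Rightarrow> ('a \<Rightarrow> 'b) \<Rightarrow> bool" where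
  "pointwise_cluster_point e X G F \<longleftrightarrow>
     (\<forall>S \<delta> N. finite S \<and> S \<subseteq> X \<and> 0 < \<delta> \<longrightarrow> (\<exists>k\<ge>N. \<forall>x\<in>S. e (F x) (G k x) < \<delta>))"

lemma compact_space_sequence_cluster_point:
  fixes f :: "nat \<Rightarrow> 'a"
  assumes "compact_space X" "\<And>k. f k \<in> topspace X"
  obtains x where "\<And>N. x \<in> X closure_of (f ` {N..})"
proof -
  define CC where "CC N = X closure_of (f ` {N..})" for N
  have "\<Inter>(range CC) \<noteq> {}"
  proof (rule compact_space_fip[THEN iffD1, OF assms(1), rule_format], intro conjI allI impI ballI)
    fix C assume "C \<in> range CC"
    then show "closedin X C"
      unfolding CC_def by auto
  next
    fix \<F> assume "finite \<F> \<and> \<F> \<subseteq> range CC"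
    then obtain I where I: "finite I" "\<F> = CC ` I"
      by (meson finite_subset_image)
    define m where "m = Max (insert 0 I)"
    have "f m \<in> CC i" if "i \<in> I" for i
    proof -
      have "f ` {i..} \<subseteq> topspace X"
        using assms(2) by auto
      moreover have "i \<le> m"
        unfolding m_def using that I(1) by simp
      ultimately show ?thesis
        unfolding CC_def by (auto intro: closure_of_subset[THEN subsetD])
    qed
    then show "\<Inter>\<F> \<noteq> {}"
      using I(2) by blast
  qed
  then obtain x where "\<And>N. x \<in> CC N"
    by blast
  then show ?thesis
    unfolding CC_def by (rule that)
qed

lemma compactin_pointwise_cluster_point:
  assumes Z: "Metric_space Z e" and K: "compactin (Metric_space.mtopology Z e) K"
    and G: "\<And>k. G k \<in> X \<rightarrow> K"
  obtains F where "F \<in> X \<rightarrow> K" "pointwise_cluster_point e X G F"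
proof -
  interpret Z: Metric_space Z e by fact
  define PT where "PT = product_topology (\<lambda>_. subtopology Z.mtopology K) X"
  have KZ: "K \<subseteq> Z"
    using compactin_subset_topspace[OF K] by simp
  have topPT: "topspace PT = (\<Pi>\<^sub>E x\<in>X. K)"
    unfolding PT_def using KZ by auto
  have "compact_space PT"
    unfolding PT_def using compact_space_subtopology[OF K] compact_space_product_topology by blast
  moreover have "restrict (G k) X \<in> topspace PT" for k
    using G unfolding topPT by (auto simp: Pi_iff)
  \<comment> \<open>Tychonoff\<close>
  ultimately obtain F where F: "\<And>N. F \<in> PT closure_of ((\<lambda>k. restrict (G k) X) ` {N..})"
    using compact_space_sequence_cluster_point[of PT "\<lambda>k. restrict (G k) X"] by blast
  then have "F \<in> topspace PT"
    using closure_of_subset_topspace[of PT] by blast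
  then have FK: "F \<in> X \<rightarrow> K"
    unfolding topPT by auto
  have "\<exists>k\<ge>N. \<forall>x\<in>S. e (F x) (G k x) < \<delta>" if S: "finite S" "S \<subseteq> X" and "0 < \<delta>" for S \<delta> N
  proof -
    define U where "U x = {H \<in> topspace PT. H x \<in> Z.mball (F x) \<delta> \<inter> K}" for x
    have Uopen: "openin PT (U x)" if "x \<in> X" for x
      unfolding U_def PT_def
      by (intro openin_continuous_map_preimage[OF continuous_map_product_projection[OF that]])
        (simp add: openin_subtopology_Int)
    have "F x \<in> K" "F x \<in> Z" if "x \<in> S" for x
      using FK KZ S(2) that by auto
    then have F_in: "F \<in> (\<Inter>x\<in>S. U x) \<inter> topspace PT"
      unfolding U_def using \<open>F \<in> topspace PT\<close> \<open>0 < \<delta>\<close> by auto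
    have open_nbhd: "openin PT ((\<Inter>x\<in>S. U x) \<inter> topspace PT)"
      using S(2) by (intro openin_INT[OF S(1)] Uopen) blast
    obtain H where "H \<in> (\<lambda>k. restrict (G k) X) ` {N..}" "H \<in> (\<Inter>x\<in>S. U x)"
      using in_closure_of[THEN iffD1, THEN conjunct2, rule_format, OF F[of N] conjI[OF F_in open_nbhd]]
      by blast
    then obtain k where k: "k \<ge> N" "restrict (G k) X \<in> (\<Inter>x\<in>S. U x)"
      by auto
    have "e (F x) (G k x) < \<delta>" if "x \<in> S" for x
    proof -
      have "x \<in> X"
        using that S(2) by blast
      then show ?thesis
        using k(2) that unfolding U_def by auto
    qed
    then show ?thesis
      using k(1) by blast
  qed
  then have "pointwise_cluster_point e X G F"
    unfolding pointwise_cluster_point_def by blast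
  with FK show ?thesis
    by (rule that)
qed

lemma pointwise_cluster_point_closed:
  assumes Z: "Metric_space Z e" and cl: "pointwise_cluster_point e X G F"
    and F: "F \<in> X \<rightarrow> Z" and G: "\<And>k. G k \<in> X \<rightarrow> Z"
    and approx: "\<And>k. \<forall>x\<in>X. \<forall>y\<in>X. \<bar>e (G k x) (G k y) - D k x y\<bar> \<le> \<epsilon> k"
    and \<epsilon>: "\<epsilon> \<longlonglongrightarrow> 0"
    and pts: "x \<in> X" "y \<in> X" "x' \<in> X" "y' \<in> X"
    and S: "closed S" "\<And>k. (D k x y, D k x' y') \<in> S"
  shows "(e (F x) (F y), e (F x') (F y')) \<in> S"
proof -
  interpret Z: Metric_space Z e by fact
  have "\<exists>s\<in>S. dist s (e (F x) (F y), e (F x') (F y')) < r" if "0 < r" for r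
  proof -
    have "\<forall>\<^sub>F k in sequentially. \<epsilon> k < r / 4"
      using order_tendstoD(2)[OF \<epsilon>, of "r / 4"] \<open>0 < r\<close> by simp
    then obtain N where N: "\<And>k. k \<ge> N \<Longrightarrow> \<epsilon> k < r / 4"
      unfolding eventually_sequentially by blast
    have "\<exists>k\<ge>N. \<forall>a\<in>{x, y, x', y'}. e (F a) (G k a) < r / 8"
      using cl[unfolded pointwise_cluster_point_def, rule_format, of "{x, y, x', y'}" "r / 8" N]
        \<open>0 < r\<close> pts by simp
    then obtain k where k: "k \<ge> N" "\<And>a. a \<in> {x, y, x', y'} \<Longrightarrow> e (F a) (G k a) < r / 8"
      by blast
    have close: "\<bar>D k a b - e (F a) (F b)\<bar> < r / 2" if "a \<in> {x, y, x', y'}" "b \<in> {x, y, x', y'}" for a b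
    proof -
      have ab: "a \<in> X" "b \<in> X"
        using that pts by auto
      have "\<bar>e (F a) (F b) - e (G k a) (G k b)\<bar> \<le> e (F a) (G k a) + e (F b) (G k b)"
        using ab F G by (intro Z.mdist_diff_le) auto
      moreover have "\<bar>e (G k a) (G k b) - D k a b\<bar> \<le> \<epsilon> k"
        using approx[of k] ab by blast
      ultimately show ?thesis
        using N[OF k(1)] k(2)[OF that(1)] k(2)[OF that(2)]
        unfolding abs_le_iff abs_less_iff by linarith
    qed
    have "dist (D k x y, D k x' y') (e (F x) (F y), e (F x') (F y'))
        \<le> dist (D k x y) (e (F x) (F y)) + dist (D k x' y') (e (F x') (F y'))"
      unfolding dist_Pair_Pair by (rule sqrt_sum_squares_le_sum) simp_all
    also have "\<dots> < r"
      using close[of x y] close[of x' y'] unfolding dist_real_def by simp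
    finally show ?thesis
      using S(2) by blast
  qed
  then show ?thesis
    using closed_approachable[OF S(1)] by blast
qed

lemma pointwise_cluster_point_qs_controlled:
  assumes Z: "Metric_space Z e" and cl: "pointwise_cluster_point e M G F"
    and F: "F \<in> M \<rightarrow> Z" and G: "\<And>k. G k \<in> M \<rightarrow> Z"
    and approx: "\<And>k. \<forall>x\<in>M. \<forall>y\<in>M. \<bar>e (G k x) (G k y) - D k x y\<bar> \<le> \<epsilon> k"
    and \<epsilon>: "\<epsilon> \<longlonglongrightarrow> 0" and qs: "\<And>k. qs_controlled M d \<theta> (D k)"
  shows "qs_controlled M d \<theta> (\<lambda>x y. e (F x) (F y))"
  unfolding qs_controlled_def
proof (intro ballI impI)
  fix x y w assume xyw: "x \<in> M" "y \<in> M" "w \<in> M" "x \<noteq> w"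
  define A where "A = \<theta> (d x y / d x w)"
  have "closed {q :: real \<times> real. fst q \<le> A * snd q}"
    by (intro closed_Collect_le continuous_intros)
  moreover have "(D k x y, D k x w) \<in> {q. fst q \<le> A * snd q}" for k
    using qs[of k] xyw unfolding qs_controlled_def A_def by simp
  ultimately have "(e (F x) (F y), e (F x) (F w)) \<in> {q. fst q \<le> A * snd q}"
    by (rule pointwise_cluster_point_closed[OF Z cl F G approx \<epsilon> xyw(1,2,1,3)])
  then show "e (F x) (F y) \<le> \<theta> (d x y / d x w) * e (F x) (F w)"
    unfolding A_def by simp
qed

lemma quasisymmetric_embedding_from_approximations:
  assumes M: "Metric_space M d" and Z: "Metric_space Z e"
    and cM: "compact_space (Metric_space.mtopology M d)"
    and K: "compactin (Metric_space.mtopology Z e) K"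
    and mono: "mono_on {0..} \<theta>" and nonneg: "\<And>t. 0 \<le> t \<Longrightarrow> 0 \<le> \<theta> t"
    and small: "\<And>\<epsilon>. 0 < \<epsilon> \<Longrightarrow> \<exists>\<delta>>0. \<forall>t. 0 \<le> t \<and> t < \<delta> \<longrightarrow> \<theta> t < \<epsilon>"
    and pts: "x0 \<in> M" "y0 \<in> M" "x0 \<noteq> y0" and c: "0 < c"
    and G: "\<And>k. G k \<in> M \<rightarrow> K"
    and approx: "\<And>k. \<forall>x\<in>M. \<forall>y\<in>M. \<bar>e (G k x) (G k y) - D k x y\<bar> \<le> \<epsilon> k"
    and \<epsilon>: "\<epsilon> \<longlonglongrightarrow> 0"
    and qs: "\<And>k. qs_controlled M d \<theta> (D k)"
    and bound: "\<And>k x y. x \<in> M \<Longrightarrow> y \<in> M \<Longrightarrow> D k x y \<le> B"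
    and lower: "\<And>k. c \<le> D k x0 y0"
  shows "\<exists>F. quasisymmetric M d Z e \<theta> F"
proof -
  interpret Z: Metric_space Z e by fact
  have KZ: "K \<subseteq> Z"
    using compactin_subset_topspace[OF K] by simp
  obtain F where FK: "F \<in> M \<rightarrow> K" and cl: "pointwise_cluster_point e M G F"
    by (rule compactin_pointwise_cluster_point[OF Z K G])
  have FZ: "F \<in> M \<rightarrow> Z" and GZ: "\<And>k. G k \<in> M \<rightarrow> Z"
    using FK G KZ by (auto simp: Pi_iff)
  note limit = pointwise_cluster_point_closed[OF Z cl FZ GZ approx \<epsilon>]
  have qsF: "qs_controlled M d \<theta> (\<lambda>x y. e (F x) (F y))"
    by (rule pointwise_cluster_point_qs_controlled[OF Z cl FZ GZ approx \<epsilon> qs])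
  have bdF: "e (F x) (F y) \<le> B" if "x \<in> M" "y \<in> M" for x y
  proof -
    have "closed {q :: real \<times> real. fst q \<le> B}"
      by (intro closed_Collect_le continuous_intros)
    then have "(e (F x) (F y), e (F x) (F y)) \<in> {q. fst q \<le> B}"
      by (rule limit[OF that that]) (simp add: bound[OF that])
    then show ?thesis
      by simp
  qed
  have "closed {q :: real \<times> real. c \<le> fst q}"
    by (intro closed_Collect_le continuous_intros)
  then have "(e (F x0) (F y0), e (F x0) (F y0)) \<in> {q. c \<le> fst q}"
    by (rule limit[OF pts(1,2,1,2)]) (simp add: lower)
  then have "F x0 \<noteq> F y0"
    using c funcset_mem[OF FZ pts(2)] by auto
  then have "inj_on F M"
    by (rule qs_controlled_inj_on[OF Z FZ qsF pts(1,2)])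
  moreover have "continuous_map (Metric_space.mtopology M d) Z.mtopology F"
    by (rule qs_controlled_continuous_map[OF M Z FZ qsF mono nonneg small bdF pts])
  ultimately show ?thesis
    using quasisymmetric_if_qs_controlled[OF M Z cM FZ qsF] by blast
qed

section \<open>Embedding into a weak tangent\<close>

lemma (in Metric_space) small_copy_rescaled_distance:
  assumes \<eta>: "eta_homeo \<eta>" and l: "0 < l" and h: "h \<in> M \<rightarrow> mball p l"
    and qs: "qs_controlled M d (dual_distortion \<eta>) (\<lambda>x y. d (h x) (h y))"
    and C: "0 < C" and uv: "u \<in> M" "v \<in> M" "l < C * d (h u) (h v)"
    and pts: "x0 \<in> M" "y0 \<in> M" "x0 \<noteq> y0" and R: "\<And>a. a \<in> M \<Longrightarrow> d x0 a \<le> R"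
  shows "qs_controlled M d (dual_distortion \<eta>) (\<lambda>x y. d (h x) (h y) / l)"
    and "\<And>x y. x \<in> M \<Longrightarrow> y \<in> M \<Longrightarrow> d (h x) (h y) / l \<le> 2"
    and "1 / (2 * C * dual_distortion \<eta> (R / d x0 y0)) \<le> d (h x0) (h y0) / l"
proof -
  have hM: "h x \<in> M" "p \<in> M" "d p (h x) < l" if "x \<in> M" for x
    using h that by auto
  show "qs_controlled M d (dual_distortion \<eta>) (\<lambda>x y. d (h x) (h y) / l)"
    using qs l unfolding qs_controlled_def by (simp add: divide_right_mono)
  show "d (h x) (h y) / l \<le> 2" if "x \<in> M" "y \<in> M" for x y
  proof -
    have "d (h x) (h y) \<le> d p (h x) + d p (h y)"
      using hM that by (intro triangle'') auto
    then show ?thesis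
      using hM(3)[OF that(1)] hM(3)[OF that(2)] l by (simp add: field_simps)
  qed
  define \<Theta> where "\<Theta> = dual_distortion \<eta> (R / d x0 y0)"
  have "0 < d x0 y0" "d x0 y0 \<le> R"
    using pts R by auto
  then have "0 < \<Theta>"
    unfolding \<Theta>_def by (intro dual_distortion_pos[OF \<eta>] divide_pos_pos) auto
  have "d (h u) (h v) \<le> 2 * \<Theta> * d (h x0) (h y0)"
    unfolding \<Theta>_def
    by (rule qs_controlled_lower_bound[OF Metric_space_axioms Metric_space_axioms _ qs
          dual_distortion_mono_on[OF \<eta>] R pts uv(1,2)]) (use hM in blast)
  then have "l < C * (2 * \<Theta> * d (h x0) (h y0))"
    using uv(3) C by (meson less_le_trans mult_left_mono less_imp_le)
  then show "1 / (2 * C * \<Theta>) \<le> d (h x0) (h y0) / l"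
    using l C \<open>0 < \<Theta>\<close> by (simp add: field_simps)
qed

lemma (in Metric_space) rescaled_approximation_mcball:
  assumes Z: "Metric_space Z e" "z \<in> Z" and l: "0 < l" and g: "g \<in> mball p l \<rightarrow> Z" "g p = z"
    and g_dist: "\<And>x y. x \<in> mball p l \<Longrightarrow> y \<in> mball p l \<Longrightarrow> \<bar>e (g x) (g y) - d x y / l\<bar> < \<epsilon>"
  shows "g \<in> mball p l \<rightarrow> Metric_space.mcball Z e z (1 + \<epsilon>)"
proof
  interpret Z: Metric_space Z e by fact
  fix x assume x: "x \<in> mball p l"
  then have p: "p \<in> mball p l"
    using l by auto
  have "e z (g x) < d p x / l + \<epsilon>"
    using g_dist[OF p x] unfolding g(2) abs_less_iff by linarith
  moreover have "d p x / l < 1"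
    using x l by simp
  ultimately show "g x \<in> Z.mcball z (1 + \<epsilon>)"
    using g(1) x Z(2) by auto
qed

lemma (in Metric_space) weak_tangent_approximations:
  assumes \<eta>: "eta_homeo \<eta>" and self: "comparable_self_qs M d \<eta> p" and pwt: "in_PWT M d p Z z dZ"
    and pts: "x0 \<in> M" "y0 \<in> M" "x0 \<noteq> y0" and R: "\<And>a. a \<in> M \<Longrightarrow> d x0 a \<le> R"
  obtains c where "0 < c"
    "\<And>\<epsilon>. 0 < \<epsilon> \<Longrightarrow> \<epsilon> \<le> 1 \<Longrightarrow> \<exists>G D. G \<in> M \<rightarrow> Metric_space.mcball Z dZ z 2 \<and>
       (\<forall>x\<in>M. \<forall>y\<in>M. \<bar>dZ (G x) (G y) - D x y\<bar> < \<epsilon>) \<and>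
       qs_controlled M d (dual_distortion \<eta>) D \<and> (\<forall>x\<in>M. \<forall>y\<in>M. D x y \<le> 2) \<and> c \<le> D x0 y0"
proof -
  interpret Z: Metric_space Z dZ
    by (rule in_PWT_limit_space(1)[OF pwt])
  obtain C r0 where C: "0 < C" "0 < r0" and copies: "\<And>l. 0 < l \<Longrightarrow> l < r0 \<Longrightarrow> \<exists>h. h \<in> M \<rightarrow> mball p l \<and>
       qs_controlled M d (dual_distortion \<eta>) (\<lambda>x y. d (h x) (h y)) \<and> (\<exists>u\<in>M. \<exists>v\<in>M. l < C * d (h u) (h v))"
    using comparable_self_qs_small_copies[OF \<eta> self] by metis
  have "0 < d x0 y0" "d x0 y0 \<le> R"
    using pts R by auto
  then have "0 < dual_distortion \<eta> (R / d x0 y0)"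
    by (intro dual_distortion_pos[OF \<eta>] divide_pos_pos) auto
  then have "0 < 1 / (2 * C * dual_distortion \<eta> (R / d x0 y0))"
    using C(1) by simp
  then show ?thesis
  proof (rule that)
    fix \<epsilon> :: real assume \<epsilon>: "0 < \<epsilon>" "\<epsilon> \<le> 1"
    obtain l g where l: "0 < l" "l < r0" and g: "g \<in> mball p l \<rightarrow> Z" "g p = z"
      and g_dist: "\<And>x y. x \<in> mball p l \<Longrightarrow> y \<in> mball p l \<Longrightarrow> \<bar>dZ (g x) (g y) - d x y / l\<bar> < \<epsilon>"
      using in_PWT_approximation[OF pwt zero_less_one \<epsilon>(1) C(2)] unfolding mult_1 by metis
    obtain h u v where h: "h \<in> M \<rightarrow> mball p l" "qs_controlled M d (dual_distortion \<eta>) (\<lambda>x y. d (h x) (h y))"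
      and uv: "u \<in> M" "v \<in> M" "l < C * d (h u) (h v)"
      using copies[OF l] by blast
    define G where "G x = g (h x)" for x
    define D where "D x y = d (h x) (h y) / l" for x y
    have "g \<in> mball p l \<rightarrow> Z.mcball z (1 + \<epsilon>)"
      by (rule rescaled_approximation_mcball[OF Z.Metric_space_axioms in_PWT_limit_space(3)[OF pwt] l(1) g g_dist])
    moreover have "Z.mcball z (1 + \<epsilon>) \<subseteq> Z.mcball z 2"
      using \<epsilon>(2) by (intro Z.mcball_subset_concentric) simp
    ultimately have "G \<in> M \<rightarrow> Z.mcball z 2"
      unfolding G_def using h(1) by blast
    moreover have "\<forall>x\<in>M. \<forall>y\<in>M. \<bar>dZ (G x) (G y) - D x y\<bar> < \<epsilon>"
    proof (intro ballI)
      fix x y assume "x \<in> M" "y \<in> M"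
      then have "h x \<in> mball p l" "h y \<in> mball p l"
        using h(1) by auto
      then show "\<bar>dZ (G x) (G y) - D x y\<bar> < \<epsilon>"
        unfolding G_def D_def by (rule g_dist)
    qed
    moreover have "qs_controlled M d (dual_distortion \<eta>) D" "\<forall>x\<in>M. \<forall>y\<in>M. D x y \<le> 2"
      "1 / (2 * C * dual_distortion \<eta> (R / d x0 y0)) \<le> D x0 y0"
      using small_copy_rescaled_distance[OF \<eta> l(1) h C(1) uv pts R] unfolding D_def[abs_def] by blast+
    ultimately show "\<exists>G D. G \<in> M \<rightarrow> Z.mcball z 2 \<and> (\<forall>x\<in>M. \<forall>y\<in>M. \<bar>dZ (G x) (G y) - D x y\<bar> < \<epsilon>) \<and>
       qs_controlled M d (dual_distortion \<eta>) D \<and> (\<forall>x\<in>M. \<forall>y\<in>M. D x y \<le> 2) \<and>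
       1 / (2 * C * dual_distortion \<eta> (R / d x0 y0)) \<le> D x0 y0"
      by blast
  qed
qed

lemma (in Metric_space) weak_tangent_approximating_sequence:
  assumes \<eta>: "eta_homeo \<eta>" and self: "comparable_self_qs M d \<eta> p" and pwt: "in_PWT M d p Z z dZ"
  obtains x0 y0 c G D where "x0 \<in> M" "y0 \<in> M" "x0 \<noteq> y0" "0 < c"
    "\<And>k. G k \<in> M \<rightarrow> Metric_space.mcball Z dZ z 2"
    "\<And>k. \<forall>x\<in>M. \<forall>y\<in>M. \<bar>dZ (G k x) (G k y) - D k x y\<bar> \<le> inverse (real (Suc k))"
    "\<And>k. qs_controlled M d (dual_distortion \<eta>) (D k)"
    "\<And>k x y. x \<in> M \<Longrightarrow> y \<in> M \<Longrightarrow> D k x y \<le> 2"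
    "\<And>k. c \<le> D k x0 y0"
proof -
  obtain x0 y0 where pts: "x0 \<in> M" "y0 \<in> M" "x0 \<noteq> y0"
    using comparable_self_qs_mbounded(2)[OF \<eta> self] by blast
  obtain R where R: "\<And>a. a \<in> M \<Longrightarrow> d x0 a \<le> R"
    using comparable_self_qs_mbounded(1)[OF \<eta> self] pts(1) unfolding mbounded_alt by blast
  obtain c where c: "0 < c" and approx: "\<And>\<epsilon>. 0 < \<epsilon> \<Longrightarrow> \<epsilon> \<le> 1 \<Longrightarrow>
       \<exists>G D. G \<in> M \<rightarrow> Metric_space.mcball Z dZ z 2 \<and>
       (\<forall>x\<in>M. \<forall>y\<in>M. \<bar>dZ (G x) (G y) - D x y\<bar> < \<epsilon>) \<and>
       qs_controlled M d (dual_distortion \<eta>) D \<and> (\<forall>x\<in>M. \<forall>y\<in>M. D x y \<le> 2) \<and> c \<le> D x0 y0"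
    using weak_tangent_approximations[OF \<eta> self pwt pts R] by metis
  have "\<exists>G D. G \<in> M \<rightarrow> Metric_space.mcball Z dZ z 2 \<and>
       (\<forall>x\<in>M. \<forall>y\<in>M. \<bar>dZ (G x) (G y) - D x y\<bar> \<le> inverse (real (Suc k))) \<and>
       qs_controlled M d (dual_distortion \<eta>) D \<and> (\<forall>x\<in>M. \<forall>y\<in>M. D x y \<le> 2) \<and> c \<le> D x0 y0" for k
  proof -
    have k: "0 < inverse (real (Suc k))" "inverse (real (Suc k)) \<le> 1"
      by (simp_all add: inverse_le_1_iff)
    obtain G D where "G \<in> M \<rightarrow> Metric_space.mcball Z dZ z 2"
      "\<forall>x\<in>M. \<forall>y\<in>M. \<bar>dZ (G x) (G y) - D x y\<bar> < inverse (real (Suc k))"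
      "qs_controlled M d (dual_distortion \<eta>) D" "\<forall>x\<in>M. \<forall>y\<in>M. D x y \<le> 2" "c \<le> D x0 y0"
      using approx[OF k] by (elim exE conjE)
    then show ?thesis
      by (intro exI[of _ G] exI[of _ D]) (simp add: less_imp_le)
  qed
  then obtain G D where "\<forall>k. G k \<in> M \<rightarrow> Metric_space.mcball Z dZ z 2 \<and>
       (\<forall>x\<in>M. \<forall>y\<in>M. \<bar>dZ (G k x) (G k y) - D k x y\<bar> \<le> inverse (real (Suc k))) \<and>
       qs_controlled M d (dual_distortion \<eta>) (D k) \<and> (\<forall>x\<in>M. \<forall>y\<in>M. D k x y \<le> 2) \<and> c \<le> D k x0 y0"
    by metis
  then show ?thesis
    using that[OF pts c] by blast
qed

theorem corollary5p2:
  fixes M :: "'a set" and d :: "'a \<Rightarrow> 'a \<Rightarrow> real" and p :: 'a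
    and \<eta> :: "real \<Rightarrow> real"
  assumes "Metric_space M d"
    and "proper_mspace M d"
    and "doubling_mspace M d"
    and "p \<in> M"
    and "eta_homeo \<eta>"
    and "comparable_self_qs M d \<eta> p"
  shows "\<forall>(Z :: 'b set) (z :: 'b) dZ. in_PWT M d p Z z dZ \<longrightarrow>
           (\<exists>f. quasisymmetric M d Z dZ (\<lambda>t. 1 / inv_into {0..} \<eta> (1 / t)) f)"
proof (intro allI impI)
  fix Z :: "'b set" and z :: 'b and dZ assume pwt: "in_PWT M d p Z z dZ"
  interpret M: Metric_space M d by fact
  interpret Z: Metric_space Z dZ
    by (rule in_PWT_limit_space(1)[OF pwt])
  have cM: "compact_space M.mtopology"
    using M.proper_mspace_compact_space[OF assms(2) M.comparable_self_qs_mbounded(1)[OF assms(5,6)]] .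
  obtain x0 y0 c G D where seq: "x0 \<in> M" "y0 \<in> M" "x0 \<noteq> y0" "0 < c"
    "\<And>k. G k \<in> M \<rightarrow> Z.mcball z 2"
    "\<And>k. \<forall>x\<in>M. \<forall>y\<in>M. \<bar>dZ (G k x) (G k y) - D k x y\<bar> \<le> inverse (real (Suc k))"
    "\<And>k. qs_controlled M d (dual_distortion \<eta>) (D k)"
    "\<And>k x y. x \<in> M \<Longrightarrow> y \<in> M \<Longrightarrow> D k x y \<le> 2" "\<And>k. c \<le> D k x0 y0"
    using M.weak_tangent_approximating_sequence[OF assms(5,6) pwt] by blast
  define K where "K = Z.mtopology closure_of Z.mcball z 2"
  have K: "compactin Z.mtopology K"
    using Z.mtotally_bounded_eq_compact_closure_of[OF in_PWT_limit_space(2)[OF pwt]]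
      M.in_PWT_mcball_mtotally_bounded[OF assms(3) pwt] unfolding K_def by blast
  have GK: "G k \<in> M \<rightarrow> K" for k
    using seq(5)[of k] closure_of_subset[of _ Z.mtopology, unfolded Z.topspace_mtopology, OF Z.mcball_subset_mspace]
    unfolding K_def by auto
  have "\<exists>F. quasisymmetric M d Z dZ (dual_distortion \<eta>) F"
    by (rule quasisymmetric_embedding_from_approximations[OF assms(1) Z.Metric_space_axioms cM K
        dual_distortion_mono_on[OF assms(5)] dual_distortion_nonneg[OF assms(5)]
        dual_distortion_small[OF assms(5)] seq(1-4) GK seq(6) LIMSEQ_inverse_real_of_nat seq(7-9)])
  then show "\<exists>f. quasisymmetric M d Z dZ (\<lambda>t. 1 / inv_into {0..} \<eta> (1 / t)) f"
    unfolding dual_distortion_def[abs_def] .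
qed

end
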